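(* For every positive integer $n$ and complex parameters $a,b$ (with all denominators nonzero), \begin{align*} \sum_{k=0}^n \frac{(q^{-n}, q^n; q)_k\, q^k}{(q/a, q/b; q)_k} ={}&(-1)^n q^{n(n+1)/2} (1-q^n) \frac{(a, b; q)_n}{(q/a, q/b; q)_n}\biggl(\frac{1}{ab}\biggr)^n \Biggl\{\frac{1-ab}{(1-a)(1-b)}+\frac{(1/a, 1/b; q)_n}{(1-q^n)(a, b; q)_n} (-ab)^n q^{-n(n-1)/2}\\ &+(1-ab)\sum_{j=1}^{n-1} \frac{(1+q^j) (1/a, 1/b; q)_j}{ (a, b; q)_{j+1}} (-ab)^j q^{-j(j-1)/2}\Biggr\}. \end{align*}
   Context: Throughout, $q$ is a complex number with $0<|q|<1$. For $x\in\mathbb{C}$ and an integer $n\ge 0$, $(x;q)_n=\prod_{k=0}^{n-1}(1-xq^k)$, and $(x_1,\dots,x_m;q)_n=(x_1;q)_n\cdots(x_m;q)_n$. *)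

theory Defs
  imports "HOL-Analysis.Analysis"
begin

definition qpoch :: "complex \<Rightarrow> complex \<Rightarrow> nat \<Rightarrow> complex" where
  "qpoch x q n = (\<Prod>k<n. (1 - x * q ^ k))"

end

theory Submission
  imports Defs
begin

text \<open>
  Write the left-hand side as L n and the right-hand side as P n * B n (prefactor times
  bracket). Both sides satisfy the recurrence X (m + 1) = r m * X m + c m with
  r m = P (m + 1) / P m, and they agree for n = 1.

  For the left-hand side this is creative telescoping: the k-th summand of L (m + 1) - r m * L m
  is c m * (G k - G (k + 1)) for the certificate G k = (q^(-m-1), q^m; q)_k / (1/a, 1/b; q)_k,
  which vanishes at k = m + 2. For the right-hand side, P n times the isolated term of the
  bracket is q^n (1 - 1/a) (1 - 1/b) / ((1 - q^n/a) (1 - q^n/b)), and the j-th summand of the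
  bracket is a rational multiple of the isolated term with index j. Hence
  P (m + 1) * (B (m + 1) - B m) is a rational function of q^m, and it equals c m.
\<close>

lemma qpoch_0 [simp]: "qpoch x q 0 = 1"
  by (simp add: qpoch_def)

lemma qpoch_Suc: "qpoch x q (Suc n) = qpoch x q n * (1 - x * q ^ n)"
  by (simp add: qpoch_def)

lemma qpoch_Suc_left: "qpoch x q (Suc n) = (1 - x) * qpoch (x * q) q n"
  unfolding qpoch_def prod.lessThan_Suc_shift by (simp add: mult.assoc)

lemma qpoch_eq_0_iff: "qpoch x q n = 0 \<longleftrightarrow> (\<exists>k<n. x * q ^ k = 1)"
  by (auto simp: qpoch_def)

lemma qpoch_nonzero_le: "qpoch x q n \<noteq> 0 \<Longrightarrow> k \<le> n \<Longrightarrow> qpoch x q k \<noteq> 0"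
  by (auto simp: qpoch_eq_0_iff)

lemma qpoch_inverse_power_eq_0:
  assumes "q \<noteq> 0" and "m < n"
  shows "qpoch (inverse (q ^ m)) q n = 0"
  unfolding qpoch_eq_0_iff using assms by auto

lemma qpoch_mult_base:
  assumes "x \<noteq> 1"
  shows "qpoch (x * q) q n = qpoch x q n * (1 - x * q ^ n) / (1 - x)"
  using assms by (simp add: qpoch_Suc_left flip: qpoch_Suc)

lemma power_neq_one:
  fixes q :: "'a :: real_normed_div_algebra"
  assumes "norm q < 1" and "n > 0"
  shows "q ^ n \<noteq> 1"
proof
  assume "q ^ n = 1"
  then have "norm q ^ n = 1" by (metis norm_one norm_power)
  moreover have "norm q ^ n < 1" using assms by (simp add: power_less_one_iff)
  ultimately show False by simp
qed

lemma triangular_number_eq: "n * (n + 1) div 2 = n * (n - 1) div 2 + (n :: nat)"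
proof -
  have "n * (n + 1) = n * (n - 1) + 2 * n" by (cases n) (auto simp: algebra_simps)
  then show ?thesis by simp
qed

definition recurrence_coeff :: "complex \<Rightarrow> complex \<Rightarrow> complex \<Rightarrow> complex \<Rightarrow> complex" where
  "recurrence_coeff q a b z =
     - (q * z) * (1 - q * z) * (1 - a * z) * (1 - b * z) / ((1 - z) * (a - q * z) * (b - q * z))"

definition recurrence_inhom :: "complex \<Rightarrow> complex \<Rightarrow> complex \<Rightarrow> complex \<Rightarrow> complex" where
  "recurrence_inhom q a b z =
     q * z * (1 - q * z * z) * (1 - a) * (1 - b) / ((1 - z) * (a - q * z) * (b - q * z))"

definition lhs_term :: "complex \<Rightarrow> complex \<Rightarrow> complex \<Rightarrow> nat \<Rightarrow> nat \<Rightarrow> complex" where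
  "lhs_term q a b n k = qpoch (inverse (q ^ n)) q k * qpoch (q ^ n) q k * q ^ k
                          / (qpoch (q / a) q k * qpoch (q / b) q k)"

definition lhs_sum :: "complex \<Rightarrow> complex \<Rightarrow> complex \<Rightarrow> nat \<Rightarrow> complex" where
  "lhs_sum q a b n = (\<Sum>k=0..n. lhs_term q a b n k)"

definition certificate :: "complex \<Rightarrow> complex \<Rightarrow> complex \<Rightarrow> nat \<Rightarrow> nat \<Rightarrow> complex" where
  "certificate q a b m k = qpoch (inverse (q ^ Suc m)) q k * qpoch (q ^ m) q k
                             / (qpoch (1 / a) q k * qpoch (1 / b) q k)"

lemma certificate_Suc:
  "certificate q a b m (Suc k) = certificate q a b m k
     * ((1 - q ^ k / (q * q ^ m)) * (1 - q ^ m * q ^ k) / ((1 - q ^ k / a) * (1 - q ^ k / b)))"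
  by (simp add: certificate_def qpoch_Suc field_simps)

lemma telescoping_identity:
  assumes "q \<noteq> 0" "z \<noteq> 0" "z \<noteq> 1" "q * z \<noteq> 1" "a \<noteq> 0" "b \<noteq> 0"
    and "a \<noteq> q * z" "b \<noteq> q * z" "y \<noteq> a" "y \<noteq> b"
  shows "(1 - 1/a) * (1 - 1/b) * y * (1 - z * y) / ((1 - z) * (1 - y/a) * (1 - y/b))
      - recurrence_coeff q a b z
        * ((1 - 1/a) * (1 - 1/b) * y * (1 - y / (q * z))
           / ((1 - 1 / (q * z)) * (1 - y/a) * (1 - y/b)))
    = recurrence_inhom q a b z * (1 - (1 - y / (q * z)) * (1 - z * y) / ((1 - y/a) * (1 - y/b)))"
proof -
  have "1 - z \<noteq> 0" "1 - q * z \<noteq> 0" "a - q * z \<noteq> 0" "b - q * z \<noteq> 0" "q * z - 1 \<noteq> 0"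
    "a - y \<noteq> 0" "b - y \<noteq> 0"
    using assms by auto
  with assms show ?thesis
    unfolding recurrence_coeff_def recurrence_inhom_def
    by (simp add: divide_simps) (simp add: algebra_simps)
qed

definition rhs_prefactor :: "complex \<Rightarrow> complex \<Rightarrow> complex \<Rightarrow> nat \<Rightarrow> complex" where
  "rhs_prefactor q a b n = (-1) ^ n * q ^ (n * (n + 1) div 2) * (1 - q ^ n)
     * (qpoch a q n * qpoch b q n) / (qpoch (q / a) q n * qpoch (q / b) q n) * (1 / (a * b)) ^ n"

definition bracket_top :: "complex \<Rightarrow> complex \<Rightarrow> complex \<Rightarrow> nat \<Rightarrow> complex" where
  "bracket_top q a b n = (qpoch (1 / a) q n * qpoch (1 / b) q n)
     / ((1 - q ^ n) * (qpoch a q n * qpoch b q n)) * (- a * b) ^ n * inverse (q ^ (n * (n - 1) div 2))"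

definition bracket_term :: "complex \<Rightarrow> complex \<Rightarrow> complex \<Rightarrow> nat \<Rightarrow> complex" where
  "bracket_term q a b j = (1 + q ^ j) * (qpoch (1 / a) q j * qpoch (1 / b) q j)
     / (qpoch a q (j + 1) * qpoch b q (j + 1)) * (- a * b) ^ j * inverse (q ^ (j * (j - 1) div 2))"

definition rhs_bracket :: "complex \<Rightarrow> complex \<Rightarrow> complex \<Rightarrow> nat \<Rightarrow> complex" where
  "rhs_bracket q a b n = (1 - a * b) / ((1 - a) * (1 - b)) + bracket_top q a b n
     + (1 - a * b) * (\<Sum>j=1..n-1. bracket_term q a b j)"

lemma rhs_bracket_Suc:
  assumes "m \<ge> 1"
  shows "rhs_bracket q a b (Suc m)
    = rhs_bracket q a b m + (bracket_top q a b (Suc m) - bracket_top q a b m)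
      + (1 - a * b) * bracket_term q a b m"
proof -
  have "(\<Sum>j=1..Suc m - 1. bracket_term q a b j)
      = (\<Sum>j=1..m - 1. bracket_term q a b j) + bracket_term q a b m"
    using assms by (cases m) simp_all
  then show ?thesis by (simp add: rhs_bracket_def algebra_simps)
qed

lemma bracket_diff_identity:
  assumes "a \<noteq> 0" "b \<noteq> 0" "z \<noteq> 1" "a \<noteq> q * z" "b \<noteq> q * z"
    and "a * z \<noteq> 1" "b * z \<noteq> 1" "z \<noteq> a" "z \<noteq> b"
  shows "q * z * (1 - 1/a) * (1 - 1/b) / ((1 - q * z / a) * (1 - q * z / b))
      - recurrence_coeff q a b z
        * (1 - (1 - a * b) * ((1 + z) * (1 - z) / ((1 - a * z) * (1 - b * z))))
        * (z * (1 - 1/a) * (1 - 1/b) / ((1 - z / a) * (1 - z / b)))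
      = recurrence_inhom q a b z"
proof -
  have "1 - z \<noteq> 0" "a - q * z \<noteq> 0" "b - q * z \<noteq> 0" "1 - a * z \<noteq> 0" "1 - b * z \<noteq> 0"
    "1 - q * z / a \<noteq> 0" "1 - q * z / b \<noteq> 0" "1 - z / a \<noteq> 0" "1 - z / b \<noteq> 0"
    using assms by (auto simp: field_simps)
  with assms show ?thesis
    unfolding recurrence_coeff_def recurrence_inhom_def
    by (simp add: divide_simps) (simp add: algebra_simps)
qed

context
  fixes q a b :: complex
  assumes q_nonzero: "q \<noteq> 0" and norm_q_less_1: "norm q < 1"
    and a_nonzero: "a \<noteq> 0" and b_nonzero: "b \<noteq> 0"
begin

lemma lhs_term_eq_certificate:
  assumes "m \<ge> 1" "qpoch (1 / a) q (Suc k) \<noteq> 0" "qpoch (1 / b) q (Suc k) \<noteq> 0"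
  shows "lhs_term q a b (Suc m) k = certificate q a b m k
      * ((1 - 1/a) * (1 - 1/b) * q ^ k * (1 - q ^ m * q ^ k)
         / ((1 - q ^ m) * (1 - q ^ k / a) * (1 - q ^ k / b)))"
    and "lhs_term q a b m k = certificate q a b m k
      * ((1 - 1/a) * (1 - 1/b) * q ^ k * (1 - q ^ k / (q * q ^ m))
         / ((1 - 1 / (q * q ^ m)) * (1 - q ^ k / a) * (1 - q ^ k / b)))"
proof -
  have z: "q ^ m \<noteq> 1" "q * q ^ m \<noteq> 1"
    using power_neq_one[OF norm_q_less_1, of m] power_neq_one[OF norm_q_less_1, of "Suc m"] \<open>m \<ge> 1\<close>
    by auto
  then have "1 / (q * q ^ m) \<noteq> 1"
    by simp
  have ab: "1 / a \<noteq> 1" "1 / b \<noteq> 1"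
    using assms(2,3) by (auto simp: qpoch_Suc_left)
  have nonzero: "qpoch (1 / a) q k \<noteq> 0" "qpoch (1 / b) q k \<noteq> 0" "q ^ k \<noteq> a" "q ^ k \<noteq> b"
    using assms(2,3) a_nonzero b_nonzero by (auto simp: qpoch_Suc)
  have shifts:
    "qpoch (q / a) q k = qpoch (1 / a) q k * (1 - q ^ k / a) / (1 - 1 / a)"
    "qpoch (q / b) q k = qpoch (1 / b) q k * (1 - q ^ k / b) / (1 - 1 / b)"
    "qpoch (q * q ^ m) q k = qpoch (q ^ m) q k * (1 - q ^ m * q ^ k) / (1 - q ^ m)"
    "qpoch (inverse (q ^ m)) q k
      = qpoch (1 / (q * q ^ m)) q k * (1 - q ^ k / (q * q ^ m)) / (1 - 1 / (q * q ^ m))"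
    using qpoch_mult_base[OF ab(1), of q k] qpoch_mult_base[OF ab(2), of q k]
      qpoch_mult_base[OF z(1), of q k] qpoch_mult_base[OF \<open>1 / (q * q ^ m) \<noteq> 1\<close>, of q k] q_nonzero
    by (simp_all add: mult.commute inverse_eq_divide)
  show "lhs_term q a b (Suc m) k = certificate q a b m k
      * ((1 - 1/a) * (1 - 1/b) * q ^ k * (1 - q ^ m * q ^ k)
         / ((1 - q ^ m) * (1 - q ^ k / a) * (1 - q ^ k / b)))"
    unfolding lhs_term_def certificate_def power_Suc shifts
    using nonzero z ab q_nonzero a_nonzero b_nonzero by (simp add: field_simps)
  show "lhs_term q a b m k = certificate q a b m k
      * ((1 - 1/a) * (1 - 1/b) * q ^ k * (1 - q ^ k / (q * q ^ m))
         / ((1 - 1 / (q * q ^ m)) * (1 - q ^ k / a) * (1 - q ^ k / b)))"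
    unfolding lhs_term_def certificate_def power_Suc shifts
    using nonzero z ab q_nonzero a_nonzero b_nonzero by (simp add: field_simps)
qed

lemma lhs_term_telescoping:
  assumes "m \<ge> 1" and "a \<noteq> q ^ Suc m" and "b \<noteq> q ^ Suc m"
    and "qpoch (1 / a) q (Suc k) \<noteq> 0" and "qpoch (1 / b) q (Suc k) \<noteq> 0"
  shows "lhs_term q a b (Suc m) k - recurrence_coeff q a b (q ^ m) * lhs_term q a b m k
       = recurrence_inhom q a b (q ^ m) * (certificate q a b m k - certificate q a b m (Suc k))"
proof -
  have z: "q ^ m \<noteq> 0" "q ^ m \<noteq> 1" "q * q ^ m \<noteq> 1"
    using q_nonzero power_neq_one[OF norm_q_less_1, of m] power_neq_one[OF norm_q_less_1, of "Suc m"]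
      \<open>m \<ge> 1\<close> by auto
  have y: "q ^ k \<noteq> a" "q ^ k \<noteq> b"
    using assms(4,5) a_nonzero b_nonzero by (auto simp: qpoch_Suc)
  have "a \<noteq> q * q ^ m" "b \<noteq> q * q ^ m"
    using assms(2,3) by simp_all
  note identity = telescoping_identity[OF q_nonzero z(1-3) a_nonzero b_nonzero this y]
  have scale: "G * T1 - r * (G * T0) = c * (G - G * C)"
    if "T1 - r * T0 = c * (1 - C)" for G T1 T0 r c C :: complex
  proof -
    have "G * T1 - r * (G * T0) = G * (T1 - r * T0)" by (simp add: algebra_simps)
    also have "\<dots> = c * (G - G * C)" unfolding that by (simp add: algebra_simps)
    finally show ?thesis .
  qed
  show ?thesis
    unfolding lhs_term_eq_certificate[OF assms(1,4,5)] certificate_Suc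
    by (rule scale[OF identity])
qed

lemma lhs_sum_recurrence:
  assumes "m \<ge> 1" and "a \<noteq> 1" and "b \<noteq> 1"
    and "qpoch (q / a) q (Suc m) \<noteq> 0" and "qpoch (q / b) q (Suc m) \<noteq> 0"
  shows "lhs_sum q a b (Suc m)
    = recurrence_coeff q a b (q ^ m) * lhs_sum q a b m + recurrence_inhom q a b (q ^ m)"
proof -
  define r c where "r = recurrence_coeff q a b (q ^ m)" and "c = recurrence_inhom q a b (q ^ m)"
  have "qpoch (1 / a) q (Suc (Suc m)) \<noteq> 0" "qpoch (1 / b) q (Suc (Suc m)) \<noteq> 0"
    using assms(2-5) by (simp_all add: qpoch_Suc_left)
  then have certificate_defined: "qpoch (1 / a) q (Suc k) \<noteq> 0" "qpoch (1 / b) q (Suc k) \<noteq> 0"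
    if "k \<le> Suc m" for k
    using that qpoch_nonzero_le[of "1 / a" q "Suc (Suc m)"] qpoch_nonzero_le[of "1 / b" q "Suc (Suc m)"]
    by auto
  have "q / a * q ^ m \<noteq> 1" "q / b * q ^ m \<noteq> 1"
    using assms(4,5) unfolding qpoch_eq_0_iff by blast+
  then have "a \<noteq> q ^ Suc m" "b \<noteq> q ^ Suc m"
    using q_nonzero by auto
  then have "lhs_term q a b (Suc m) k - r * lhs_term q a b m k
      = c * (certificate q a b m k - certificate q a b m (Suc k))" if "k \<le> Suc m" for k
    unfolding r_def c_def using lhs_term_telescoping assms(1) certificate_defined[OF that] by blast
  then have "(\<Sum>k\<le>Suc m. lhs_term q a b (Suc m) k - r * lhs_term q a b m k)
      = (\<Sum>k\<le>Suc m. c * (certificate q a b m k - certificate q a b m (Suc k)))"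
    by (intro sum.cong) auto
  also have "\<dots> = c * (certificate q a b m 0 - certificate q a b m (Suc (Suc m)))"
    by (simp only: sum_distrib_left[symmetric] sum_telescope)
  also have "\<dots> = c"
    using qpoch_inverse_power_eq_0[OF q_nonzero, of "Suc m" "Suc (Suc m)"] by (simp add: certificate_def)
  finally have "(\<Sum>k\<le>Suc m. lhs_term q a b (Suc m) k) - r * (\<Sum>k\<le>Suc m. lhs_term q a b m k) = c"
    by (simp only: sum_subtractf sum_distrib_left)
  moreover have "lhs_term q a b m (Suc m) = 0"
    using qpoch_inverse_power_eq_0[OF q_nonzero, of m "Suc m"] by (simp add: lhs_term_def)
  ultimately have "lhs_sum q a b (Suc m) - r * lhs_sum q a b m = c"
    by (simp add: lhs_sum_def atLeast0AtMost)
  then show ?thesis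
    unfolding r_def c_def by (simp add: algebra_simps)
qed

lemma bracket_term_eq_bracket_top:
  assumes "j \<ge> 1" and "qpoch a q (Suc j) \<noteq> 0" and "qpoch b q (Suc j) \<noteq> 0"
  shows "bracket_term q a b j
    = (1 + q ^ j) * (1 - q ^ j) / ((1 - a * q ^ j) * (1 - b * q ^ j)) * bracket_top q a b j"
proof -
  define z I A B W where "z = q ^ j" and "I = qpoch (1 / a) q j * qpoch (1 / b) q j"
    and "A = qpoch a q j" and "B = qpoch b q j"
    and "W = (- a * b) ^ j * inverse (q ^ (j * (j - 1) div 2))"
  have "1 - z \<noteq> 0" "A \<noteq> 0" "B \<noteq> 0" "1 - a * z \<noteq> 0" "1 - b * z \<noteq> 0"
    using power_neq_one[OF norm_q_less_1] assms by (auto simp: z_def A_def B_def qpoch_Suc)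
  then have "(1 + z) * I / (A * (1 - a * z) * (B * (1 - b * z))) * W
      = (1 + z) * (1 - z) / ((1 - a * z) * (1 - b * z)) * (I / ((1 - z) * (A * B)) * W)"
    by (simp add: divide_simps)
  then show ?thesis
    by (simp add: bracket_term_def bracket_top_def qpoch_Suc z_def I_def A_def B_def W_def mult.assoc)
qed

lemma rhs_prefactor_Suc:
  assumes "m \<ge> 1" and "qpoch (q / a) q (Suc m) \<noteq> 0" and "qpoch (q / b) q (Suc m) \<noteq> 0"
  shows "rhs_prefactor q a b (Suc m) = recurrence_coeff q a b (q ^ m) * rhs_prefactor q a b m"
proof -
  define z where "z = q ^ m"
  have "q ^ (Suc m * (Suc m + 1) div 2) = q ^ (m * (m + 1) div 2) * (q * z)"
    using triangular_number_eq[of "Suc m"] by (simp add: z_def power_add mult.commute)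
  moreover have "z \<noteq> 1"
    using power_neq_one[OF norm_q_less_1] assms(1) by (simp add: z_def)
  moreover have "qpoch (q / a) q m \<noteq> 0" "qpoch (q / b) q m \<noteq> 0" "a \<noteq> q * z" "b \<noteq> q * z"
    using assms(2,3) a_nonzero b_nonzero by (auto simp: qpoch_Suc z_def field_simps)
  ultimately show ?thesis
    using q_nonzero a_nonzero b_nonzero
    unfolding rhs_prefactor_def recurrence_coeff_def qpoch_Suc power_Suc z_def[symmetric]
    by (simp add: divide_simps)
qed

lemma rhs_prefactor_mult_bracket_top:
  assumes "n \<ge> 1" and "qpoch a q n \<noteq> 0" and "qpoch b q n \<noteq> 0"
    and "qpoch (q / a) q n \<noteq> 0" and "qpoch (q / b) q n \<noteq> 0"
  shows "rhs_prefactor q a b n * bracket_top q a b n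
    = q ^ n * (1 - 1 / a) * (1 - 1 / b) / ((1 - q ^ n / a) * (1 - q ^ n / b))"
proof -
  define s1 s2 s3 E z A B C D I J where "s1 = (-1 :: complex) ^ n" and "s2 = (1 / (a * b)) ^ n"
    and "s3 = (- a * b) ^ n"
    and "E = q ^ (n * (n - 1) div 2)" and "z = q ^ n"
    and "A = qpoch a q n" and "B = qpoch b q n" and "C = qpoch (q / a) q n" and "D = qpoch (q / b) q n"
    and "I = qpoch (1 / a) q n" and "J = qpoch (1 / b) q n"
  have "s1 * s2 * s3 = 1"
    using a_nonzero b_nonzero by (simp add: s1_def s2_def s3_def flip: power_mult_distrib)
  have "E \<noteq> 0" "1 - z \<noteq> 0" "A \<noteq> 0" "B \<noteq> 0" "C \<noteq> 0" "D \<noteq> 0"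
    using q_nonzero power_neq_one[OF norm_q_less_1] assms
    by (simp_all add: E_def z_def A_def B_def C_def D_def)
  then have "rhs_prefactor q a b n * bracket_top q a b n = s1 * s2 * s3 * (z * (I * J) / (C * D))"
    unfolding rhs_prefactor_def bracket_top_def triangular_number_eq[of n] power_add
    unfolding s1_def[symmetric] s2_def[symmetric] s3_def[symmetric]
      E_def[symmetric] z_def[symmetric] A_def[symmetric] B_def[symmetric] C_def[symmetric]
      D_def[symmetric] I_def[symmetric] J_def[symmetric]
    by (simp add: field_simps)
  also have "\<dots> = z * (I * J) / (C * D)"
    using \<open>s1 * s2 * s3 = 1\<close> by simp
  also have "\<dots> = z * (1 - 1 / a) * (1 - 1 / b) / ((1 - z / a) * (1 - z / b))"
  proof -
    obtain i where "n = Suc i" using assms(1) by (cases n) auto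
    then have nonzero: "1 - z / a \<noteq> 0" "1 - z / b \<noteq> 0"
      using assms(4,5) by (auto simp: C_def D_def z_def qpoch_Suc)
    have "I * (1 - z / a) = (1 - 1 / a) * C" "J * (1 - z / b) = (1 - 1 / b) * D"
      using qpoch_Suc[of "1 / _" q n] qpoch_Suc_left[of "1 / _" q n]
      by (simp_all add: I_def J_def C_def D_def z_def)
    then have "I = (1 - 1 / a) * C / (1 - z / a)" "J = (1 - 1 / b) * D / (1 - z / b)"
      using nonzero by (simp_all add: eq_divide_eq)
    then show ?thesis using \<open>C \<noteq> 0\<close> \<open>D \<noteq> 0\<close> nonzero by simp
  qed
  finally show ?thesis by (simp add: z_def)
qed

lemma rhs_prefactor_Suc_mult_bracket_diff:
  assumes "m \<ge> 1"
    and "qpoch (q / a) q (Suc m) \<noteq> 0" and "qpoch (q / b) q (Suc m) \<noteq> 0"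
    and "qpoch a q (Suc m) \<noteq> 0" and "qpoch b q (Suc m) \<noteq> 0"
  shows "rhs_prefactor q a b (Suc m) * (rhs_bracket q a b (Suc m) - rhs_bracket q a b m)
    = recurrence_inhom q a b (q ^ m)"
proof -
  define z r K where "z = q ^ m" and "r = recurrence_coeff q a b z"
    and "K = (1 + z) * (1 - z) / ((1 - a * z) * (1 - b * z))"
  have below: "qpoch (q / a) q m \<noteq> 0" "qpoch (q / b) q m \<noteq> 0" "qpoch a q m \<noteq> 0" "qpoch b q m \<noteq> 0"
    using assms(2-5) qpoch_nonzero_le[of _ q "Suc m" m] by auto
  have top_Suc: "rhs_prefactor q a b (Suc m) * bracket_top q a b (Suc m)
      = q * z * (1 - 1 / a) * (1 - 1 / b) / ((1 - q * z / a) * (1 - q * z / b))"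
    using rhs_prefactor_mult_bracket_top[of "Suc m"] assms by (simp add: z_def)
  have top: "rhs_prefactor q a b m * bracket_top q a b m
      = z * (1 - 1 / a) * (1 - 1 / b) / ((1 - z / a) * (1 - z / b))"
    using rhs_prefactor_mult_bracket_top[OF assms(1) below(3,4,1,2)] by (simp add: z_def)
  have "z \<noteq> 1" "a \<noteq> q * z" "b \<noteq> q * z" "a * z \<noteq> 1" "b * z \<noteq> 1" "z \<noteq> a" "z \<noteq> b"
  proof -
    obtain i where "m = Suc i" using assms(1) by (cases m) auto
    then show "z \<noteq> 1" "a \<noteq> q * z" "b \<noteq> q * z" "a * z \<noteq> 1" "b * z \<noteq> 1" "z \<noteq> a" "z \<noteq> b"
      using assms(2-5) power_neq_one[OF norm_q_less_1, of m] a_nonzero b_nonzero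
      by (auto simp: z_def qpoch_Suc)
  qed
  note identity = bracket_diff_identity[OF a_nonzero b_nonzero this, folded K_def r_def]
  have "rhs_prefactor q a b (Suc m) * (rhs_bracket q a b (Suc m) - rhs_bracket q a b m)
      = rhs_prefactor q a b (Suc m) * bracket_top q a b (Suc m)
        - r * (1 - (1 - a * b) * K) * (rhs_prefactor q a b m * bracket_top q a b m)"
    using rhs_prefactor_Suc[OF assms(1-3)] bracket_term_eq_bracket_top[OF assms(1,4,5)]
    by (simp add: rhs_bracket_Suc[OF assms(1)] r_def K_def z_def algebra_simps)
  also have "\<dots> = recurrence_inhom q a b (q ^ m)"
    unfolding top_Suc top identity by (simp add: z_def)
  finally show ?thesis .
qed

lemma rhs_recurrence:
  assumes "m \<ge> 1"
    and "qpoch (q / a) q (Suc m) \<noteq> 0" and "qpoch (q / b) q (Suc m) \<noteq> 0"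
    and "qpoch a q (Suc m) \<noteq> 0" and "qpoch b q (Suc m) \<noteq> 0"
  shows "rhs_prefactor q a b (Suc m) * rhs_bracket q a b (Suc m)
    = recurrence_coeff q a b (q ^ m) * (rhs_prefactor q a b m * rhs_bracket q a b m)
      + recurrence_inhom q a b (q ^ m)"
  using rhs_prefactor_Suc_mult_bracket_diff[OF assms] rhs_prefactor_Suc[OF assms(1-3)]
  by (simp add: algebra_simps)

lemma lhs_sum_one:
  assumes "a \<noteq> 1" and "b \<noteq> 1" and "a \<noteq> q" and "b \<noteq> q"
  shows "lhs_sum q a b 1 = rhs_prefactor q a b 1 * rhs_bracket q a b 1"
proof -
  have "q \<noteq> 1" using power_neq_one[OF norm_q_less_1, of 1] by simp
  with assms q_nonzero a_nonzero b_nonzero show ?thesis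
    unfolding lhs_sum_def lhs_term_def rhs_prefactor_def rhs_bracket_def bracket_top_def
    by (simp add: qpoch_def divide_simps) (simp add: algebra_simps)
qed

lemma lhs_sum_eq_rhs:
  assumes "n \<ge> 1"
    and "qpoch (q / a) q n \<noteq> 0" and "qpoch (q / b) q n \<noteq> 0"
    and "qpoch a q n \<noteq> 0" and "qpoch b q n \<noteq> 0"
  shows "lhs_sum q a b n = rhs_prefactor q a b n * rhs_bracket q a b n"
  using assms
proof (induction n rule: nat_induct_at_least)
  case base
  then show ?case
    using a_nonzero b_nonzero by (intro lhs_sum_one) (auto simp: qpoch_def)
next
  case (Suc m)
  have "a \<noteq> 1" "b \<noteq> 1"
    using Suc.prems(3,4) by (auto simp: qpoch_Suc_left)
  moreover have "lhs_sum q a b m = rhs_prefactor q a b m * rhs_bracket q a b m"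
    using Suc.IH Suc.prems qpoch_nonzero_le[of _ q "Suc m" m] by auto
  ultimately show ?case
    using lhs_sum_recurrence[OF Suc.hyps _ _ Suc.prems(1,2)] rhs_recurrence[OF Suc.hyps Suc.prems]
    by simp
qed

end

theorem theorem2p7:
  fixes q a b :: complex and n :: nat
  assumes hq0: "0 < norm q" and hq1: "norm q < 1"
    and hn: "n \<ge> 1"
    and ha0: "a \<noteq> 0" and hb0: "b \<noteq> 0"
    and hqa: "qpoch (q / a) q n \<noteq> 0" and hqb: "qpoch (q / b) q n \<noteq> 0"
    and hA: "qpoch a q n \<noteq> 0" and hB: "qpoch b q n \<noteq> 0"
  shows "(\<Sum>k=0..n. qpoch (inverse (q ^ n)) q k * qpoch (q ^ n) q k * q ^ k
                     / (qpoch (q / a) q k * qpoch (q / b) q k))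
   = (-1) ^ n * q ^ (n * (n + 1) div 2) * (1 - q ^ n)
     * (qpoch a q n * qpoch b q n) / (qpoch (q / a) q n * qpoch (q / b) q n)
     * (1 / (a * b)) ^ n
     * ( (1 - a * b) / ((1 - a) * (1 - b))
       + (qpoch (1 / a) q n * qpoch (1 / b) q n)
           / ((1 - q ^ n) * (qpoch a q n * qpoch b q n))
           * (- a * b) ^ n * inverse (q ^ (n * (n - 1) div 2))
       + (1 - a * b) * (\<Sum>j=1..n-1. (1 + q ^ j) * (qpoch (1 / a) q j * qpoch (1 / b) q j)
           / (qpoch a q (j + 1) * qpoch b q (j + 1))
           * (- a * b) ^ j * inverse (q ^ (j * (j - 1) div 2))))"
proof -
  have "q \<noteq> 0" using hq0 by auto
  from lhs_sum_eq_rhs[OF this hq1 ha0 hb0 hn hqa hqb hA hB] show ?thesis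
    unfolding lhs_sum_def lhs_term_def rhs_prefactor_def rhs_bracket_def bracket_top_def
      bracket_term_def .
qed

end
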